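(* Let $H$ be a reduced valuation monoid with quotient group $G=\mathsf{q}(H)$, and let $X$ be a finite subset of $G$ containing the identity $1$. Then there exists a unique $a\in G$ such that $aX=\{ax: x\in X\}$ is a finite subset of $H$ containing $1$.
   Context: All monoids are written multiplicatively. A commutative monoid $H$ is cancellative if $ac=bc$ implies $a=b$ for all $a,b,c\in H$. For a commutative cancellative monoid $H$, $\mathsf{q}(H)$ denotes its quotient (Grothendieck) group, with $H\subseteq \mathsf{q}(H)$ and $\mathsf{q}(H)=\{ab^{-1}: a,b\in H\}$. A commutative cancellative monoid $H$ is a valuation monoid if for every $x\in\mathsf{q}(H)$ we have $x\in H$ or $x^{-1}\in H$; it is reduced if its only invertible element is the identity $1$. *)

theory Defs
  imports "HOL-Algebra.Group"
begin

text \<open>A commutative cancellative monoid H is modelled, via its embedding into its quotient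
group, as a submonoid H of a commutative group G such that every element of G is a
quotient a b^-1 with a, b in H; then G is (isomorphic to) the quotient group q(H).\<close>

definition submonoid_quotient_group :: "('a, 'b) monoid_scheme \<Rightarrow> 'a set \<Rightarrow> bool" where
  "submonoid_quotient_group G H \<longleftrightarrow>
     comm_group G \<and> H \<subseteq> carrier G \<and> \<one>\<^bsub>G\<^esub> \<in> H \<and>
     (\<forall>a\<in>H. \<forall>b\<in>H. a \<otimes>\<^bsub>G\<^esub> b \<in> H) \<and>
     carrier G = {a \<otimes>\<^bsub>G\<^esub> inv\<^bsub>G\<^esub> b | a b. a \<in> H \<and> b \<in> H}"

definition is_valuation_monoid :: "('a, 'b) monoid_scheme \<Rightarrow> 'a set \<Rightarrow> bool" where
  "is_valuation_monoid G H \<longleftrightarrow>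
     (\<forall>x\<in>carrier G. x \<in> H \<or> inv\<^bsub>G\<^esub> x \<in> H)"

definition is_reduced :: "('a, 'b) monoid_scheme \<Rightarrow> 'a set \<Rightarrow> bool" where
  "is_reduced G H \<longleftrightarrow> (\<forall>u\<in>H. (\<exists>v\<in>H. u \<otimes>\<^bsub>G\<^esub> v = \<one>\<^bsub>G\<^esub>) \<longrightarrow> u = \<one>\<^bsub>G\<^esub>)"

end

theory Submission
  imports Defs
begin

text \<open>Inside the quotient group G, the submonoid H induces the divisibility relation
  x | y iff y x\<inverse> \<in> H. It is a preorder, total because H is a valuation monoid, and
  antisymmetric because H is reduced. So a finite nonempty X \<subseteq> G has a unique least
  element m, and 1 \<in> aX \<subseteq> H says precisely that a = x\<inverse> for a least element x of X;
  hence a = m\<inverse> is the only such translate.\<close>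

locale valuation_submonoid = comm_group G for G (structure) +
  fixes H :: "'a set"
  assumes one_in_H: "\<one> \<in> H"
    and mult_in_H: "a \<in> H \<Longrightarrow> b \<in> H \<Longrightarrow> a \<otimes> b \<in> H"
    and in_H_or_inv_in_H: "x \<in> carrier G \<Longrightarrow> x \<in> H \<or> inv x \<in> H"
begin

definition H_dvd :: "'a \<Rightarrow> 'a \<Rightarrow> bool" where
  "H_dvd x y \<longleftrightarrow> y \<otimes> inv x \<in> H"

lemma H_dvd_refl: "x \<in> carrier G \<Longrightarrow> H_dvd x x"
  by (simp add: H_dvd_def one_in_H)

lemma H_dvd_trans:
  assumes "x \<in> carrier G" "y \<in> carrier G" "z \<in> carrier G" "H_dvd x y" "H_dvd y z"
  shows "H_dvd x z"
proof -
  have "(z \<otimes> inv y) \<otimes> (y \<otimes> inv x) = z \<otimes> inv x"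
    using assms(1-3) by (simp add: m_assoc[symmetric]) (simp add: m_assoc)
  then show ?thesis
    using assms(4,5) mult_in_H unfolding H_dvd_def by metis
qed

lemma H_dvd_total:
  assumes "x \<in> carrier G" "y \<in> carrier G"
  shows "H_dvd x y \<or> H_dvd y x"
proof -
  have "inv (y \<otimes> inv x) = x \<otimes> inv y"
    using assms by (simp add: inv_mult_group m_comm)
  then show ?thesis
    using in_H_or_inv_in_H[of "y \<otimes> inv x"] assms unfolding H_dvd_def by auto
qed

lemma H_dvd_antisym:
  assumes "is_reduced G H" "x \<in> carrier G" "y \<in> carrier G" "H_dvd x y" "H_dvd y x"
  shows "x = y"
proof -
  have "(y \<otimes> inv x) \<otimes> (x \<otimes> inv y) = \<one>"
    using assms(2,3) by (simp add: m_assoc[symmetric]) (simp add: m_assoc)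
  then have "y \<otimes> inv x = \<one>"
    using assms(1,4,5) unfolding is_reduced_def H_dvd_def by blast
  then show ?thesis
    using assms(2,3) by (metis inv_equality inv_inv inv_closed)
qed

lemma finite_has_least_H_dvd:
  assumes "finite S" "S \<noteq> {}" "S \<subseteq> carrier G"
  obtains m where "m \<in> S" "\<forall>x\<in>S. H_dvd m x"
proof -
  have "transp_on S H_dvd"
    by (rule transp_onI) (meson H_dvd_trans assms(3) subsetD)
  moreover have "totalp_on S H_dvd"
    by (rule totalp_onI) (meson H_dvd_total assms(3) subsetD)
  ultimately obtain m where m: "m \<in> S" "\<forall>x\<in>S. x \<noteq> m \<longrightarrow> H_dvd m x"
    using Finite_Set.bex_least_element[OF assms(1,2)] by auto
  have "H_dvd m x" if "x \<in> S" for x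
    using m that H_dvd_refl assms(3) by (cases "x = m") auto
  then show ?thesis
    using that m(1) by blast
qed

lemma translate_by_inv_least_normalized:
  assumes "X \<subseteq> carrier G" "m \<in> X" "\<forall>x\<in>X. H_dvd m x"
  shows "(\<lambda>x. inv m \<otimes> x) ` X \<subseteq> H" "\<one> \<in> (\<lambda>x. inv m \<otimes> x) ` X"
proof -
  have "inv m \<otimes> x = x \<otimes> inv m" if "x \<in> X" for x
    using assms(1,2) that by (intro m_comm) auto
  then show "(\<lambda>x. inv m \<otimes> x) ` X \<subseteq> H"
    using assms(3) unfolding H_dvd_def by auto
  have "inv m \<otimes> m = \<one>"
    using assms(1,2) by (intro l_inv) auto
  then show "\<one> \<in> (\<lambda>x. inv m \<otimes> x) ` X"
    using assms(2) by (metis image_eqI)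
qed

lemma normalized_translate_by_inv_least:
  assumes "X \<subseteq> carrier G" "a \<in> carrier G"
    and "(\<lambda>x. a \<otimes> x) ` X \<subseteq> H" "\<one> \<in> (\<lambda>x. a \<otimes> x) ` X"
  obtains m where "m \<in> X" "a = inv m" "\<forall>x\<in>X. H_dvd m x"
proof -
  obtain m where m: "m \<in> X" "a \<otimes> m = \<one>"
    using assms(4) by auto
  have m_carrier: "m \<in> carrier G"
    using assms(1) m(1) by auto
  have a_eq: "a = inv m"
    using inv_equality[OF m(2) m_carrier assms(2)] by simp
  have "H_dvd m x" if "x \<in> X" for x
  proof -
    have "x \<otimes> inv m = a \<otimes> x"
      using a_eq assms(1) m_carrier that by (simp add: m_comm subset_iff)
    then show ?thesis
      using assms(3) that unfolding H_dvd_def by auto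
  qed
  then show ?thesis
    using that m(1) a_eq by blast
qed

theorem ex1_normalized_translate:
  assumes "is_reduced G H" "X \<subseteq> carrier G" "finite X" "X \<noteq> {}"
  shows "\<exists>!a. a \<in> carrier G \<and> (\<lambda>x. a \<otimes> x) ` X \<subseteq> H \<and> \<one> \<in> (\<lambda>x. a \<otimes> x) ` X"
proof -
  obtain m where m: "m \<in> X" "\<forall>x\<in>X. H_dvd m x"
    using finite_has_least_H_dvd assms(2-4) by metis
  show ?thesis
  proof (rule ex1I[where a = "inv m"], intro conjI)
    show "inv m \<in> carrier G"
      using assms(2) m(1) by auto
    show "(\<lambda>x. inv m \<otimes> x) ` X \<subseteq> H" "\<one> \<in> (\<lambda>x. inv m \<otimes> x) ` X"
      using translate_by_inv_least_normalized[OF assms(2) m] by auto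
  next
    fix a
    assume "a \<in> carrier G \<and> (\<lambda>x. a \<otimes> x) ` X \<subseteq> H \<and> \<one> \<in> (\<lambda>x. a \<otimes> x) ` X"
    then obtain m' where m': "m' \<in> X" "a = inv m'" "\<forall>x\<in>X. H_dvd m' x"
      using normalized_translate_by_inv_least[OF assms(2)] by blast
    have "m' = m"
      using H_dvd_antisym[OF assms(1)] assms(2) m m' by blast
    then show "a = inv m"
      using m'(2) by simp
  qed
qed

end

lemma valuation_submonoidI:
  "submonoid_quotient_group G H \<Longrightarrow> is_valuation_monoid G H \<Longrightarrow> valuation_submonoid G H"
  unfolding submonoid_quotient_group_def is_valuation_monoid_def
    valuation_submonoid_def valuation_submonoid_axioms_def
  by blast

theorem lemma1:
  fixes G :: "('a, 'b) monoid_scheme" and H :: "'a set" and X :: "'a set"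
  assumes "submonoid_quotient_group G H"
    and "is_valuation_monoid G H"
    and "is_reduced G H"
    and "finite X" and "X \<subseteq> carrier G" and "\<one>\<^bsub>G\<^esub> \<in> X"
  shows "\<exists>!a. a \<in> carrier G \<and>
           finite ((\<lambda>x. a \<otimes>\<^bsub>G\<^esub> x) ` X) \<and>
           (\<lambda>x. a \<otimes>\<^bsub>G\<^esub> x) ` X \<subseteq> H \<and>
           \<one>\<^bsub>G\<^esub> \<in> (\<lambda>x. a \<otimes>\<^bsub>G\<^esub> x) ` X"
proof -
  interpret valuation_submonoid G H
    using valuation_submonoidI assms(1,2) .
  have "X \<noteq> {}"
    using assms(6) by blast
  then show ?thesis
    using ex1_normalized_translate[OF assms(3,5,4)] by (simp add: assms(4))
qed

end
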